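(* (1) Every (unpointed) endomorphism of $\mathbf{P}^1_k$ is unpointed naively homotopic to a pointed one. (2) Let $f,g$ be pointed rational functions. Then $f\overset{\mathrm{u}}{\sim}g$ if and only if there exists $\lambda\in k^\times$ with $f\overset{\mathrm{p}}{\sim}\lambda^2g$.
   Context: Let $k$ be a field. An (unpointed) endomorphism of $\mathbf{P}^1_k$ of degree $n$ is given by a pair $(A,B)$ of polynomials of degree $\le n$ in $k[X]$ with $\mathrm{res}_{n,n}(A,B)\neq0$, up to a common scalar (a $k$-point of the open subscheme $\mathscr{U}_n\subset\mathbf{P}^{2n+1}$ complementary to the resultant hypersurface); an unpointed naive homotopy is a $k[T]$-point of $\mathscr{U}_n$, and $\overset{\mathrm{u}}{\sim}$ is the equivalence relation generated by $F(0)\sim F(1)$. A pointed rational function (base point $\infty=[1:0]$ fixed) of degree $n$ is a pair $\frac{A}{B}$ with $A$ monic of degree $n$, $\deg B<n$ and $\mathrm{res}_{n,n}(A,B)$ invertible; pointed naive homotopies are such pairs over $k[T]$, and $\overset{\mathrm{p}}{\sim}$ is the equivalence relation they generate. For $g=\frac{A}{B}$ pointed, $\lambda^2g$ is the pointed rational function $\frac{A}{\lambda^{-2}B}$. *)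

theory Defs
  imports "Subresultants.Resultant_Prelim"
begin

definition res_nn :: "nat \<Rightarrow> 'a::comm_ring_1 poly \<Rightarrow> 'a poly \<Rightarrow> 'a" where
  "res_nn n A B = resultant_sub n n A B"

text \<open>k-points of U_n (representatives; points of P^{2n+1} are taken up to a common scalar).\<close>
definition unpointed_map :: "nat \<Rightarrow> 'k::field poly \<times> 'k poly \<Rightarrow> bool" where
  "unpointed_map n F \<longleftrightarrow> degree (fst F) \<le> n \<and> degree (snd F) \<le> n \<and>
     F \<noteq> (0, 0) \<and> res_nn n (fst F) (snd F) \<noteq> 0"

text \<open>k[T]-points of U_n: a unimodular coefficient vector (so it is a point of P^{2n+1} over k[T])
  on which the resultant is a unit of k[T].  Elements of k[T][X] are 'k poly poly,
  the outer variable being X, the coefficients lying in k[T].\<close>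
definition unpointed_homotopy :: "nat \<Rightarrow> 'k::field poly poly \<times> 'k poly poly \<Rightarrow> bool" where
  "unpointed_homotopy n F \<longleftrightarrow> degree (fst F) \<le> n \<and> degree (snd F) \<le> n \<and>
     (\<exists>c d :: nat \<Rightarrow> 'k poly. (\<Sum>i\<le>n. c i * coeff (fst F) i + d i * coeff (snd F) i) = 1) \<and>
     res_nn n (fst F) (snd F) dvd 1"

definition evalT :: "'k::comm_ring_1 \<Rightarrow> 'k poly poly \<Rightarrow> 'k poly" where
  "evalT t P = map_poly (\<lambda>c. poly c t) P"

definition evalT_pair :: "'k::comm_ring_1 \<Rightarrow> 'k poly poly \<times> 'k poly poly \<Rightarrow> 'k poly \<times> 'k poly" where
  "evalT_pair t F = (evalT t (fst F), evalT t (snd F))"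

text \<open>Unpointed naive homotopy relation on representatives: generated by F(0) ~ F(1) for
  homotopies F, together with the identification of proportional representatives
  (same point of P^{2n+1}).\<close>
inductive unpointed_htpy :: "nat \<Rightarrow> 'k::field poly \<times> 'k poly \<Rightarrow> 'k poly \<times> 'k poly \<Rightarrow> bool"
  for n where
  refl: "unpointed_map n F \<Longrightarrow> unpointed_htpy n F F"
| scal: "unpointed_map n F \<Longrightarrow> c \<noteq> 0 \<Longrightarrow>
          unpointed_htpy n F (smult c (fst F), smult c (snd F))"
| htpy: "unpointed_homotopy n H \<Longrightarrow> unpointed_htpy n (evalT_pair 0 H) (evalT_pair 1 H)"
| sym: "unpointed_htpy n F G \<Longrightarrow> unpointed_htpy n G F"
| trans: "unpointed_htpy n F G \<Longrightarrow> unpointed_htpy n G H \<Longrightarrow> unpointed_htpy n F H"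

text \<open>Pointed rational functions A/B of degree n over a commutative ring R (used for R = k, k[T]).\<close>
definition pointed_rf :: "nat \<Rightarrow> 'a::comm_ring_1 poly \<times> 'a poly \<Rightarrow> bool" where
  "pointed_rf n F \<longleftrightarrow> monic (fst F) \<and> degree (fst F) = n \<and>
     (snd F = 0 \<or> degree (snd F) < n) \<and> res_nn n (fst F) (snd F) dvd 1"

inductive pointed_htpy :: "nat \<Rightarrow> 'k::field poly \<times> 'k poly \<Rightarrow> 'k poly \<times> 'k poly \<Rightarrow> bool"
  for n where
  refl: "pointed_rf n F \<Longrightarrow> pointed_htpy n F F"
| htpy: "pointed_rf n H \<Longrightarrow> pointed_htpy n (evalT_pair 0 H) (evalT_pair 1 H)"
| sym: "pointed_htpy n F G \<Longrightarrow> pointed_htpy n G F"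
| trans: "pointed_htpy n F G \<Longrightarrow> pointed_htpy n G H \<Longrightarrow> pointed_htpy n F H"

text \<open>lambda^2 g = A / (lambda^{-2} B).\<close>
definition lam_sq :: "'k::field \<Rightarrow> 'k poly \<times> 'k poly \<Rightarrow> 'k poly \<times> 'k poly" where
  "lam_sq l g = (fst g, smult (inverse (l^2)) (snd g))"

end

theory Submission
  imports Defs
begin

text \<open>A \<open>2 \<times> 2\<close> matrix acts on pairs by \<open>(A, B) \<mapsto> (aA + bB, cA + dB)\<close>; this multiplies the
  Sylvester matrix by the block matrix \<open>[[aI, bI], [cI, dI]]\<close>, so invertible matrices (over \<open>k\<close>
  or over \<open>k[T]\<close>) preserve invertibility of the resultant. Shears with entries in \<open>T k[T]\<close> are
  naive homotopies and generate \<open>SL\<^sub>2(k)\<close>, so \<open>SL\<^sub>2(k)\<close> acts trivially up to unpointed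
  homotopy; since the two coefficients of \<open>X\<^sup>n\<close> of an unpointed map are not both zero, a
  suitable element of \<open>SL\<^sub>2(k)\<close> makes it pointed.

  Conversely, pointed representatives related by a matrix of square determinant \<open>\<mu>\<^sup>2\<close> are related
  by \<open>[[1, b], [0, \<mu>\<^sup>2]]\<close>, which is pointed homotopic to \<open>\<mu>\<^sup>-\<^sup>2\<close>-scaling. The leading coefficients of
  an unpointed homotopy generate the unit ideal of \<open>k[T]\<close> (Laplace expansion of its resultant), so
  a determinant-one matrix over \<open>k[T]\<close> turns it into a pointed homotopy. Following pointed
  representatives along the generators of the unpointed relation yields \<open>f \<sim>\<^sub>p \<lambda>\<^sup>2g\<close>.\<close>

definition mat2_act :: "'a::comm_ring_1 \<Rightarrow> 'a \<Rightarrow> 'a \<Rightarrow> 'a \<Rightarrow> 'a poly \<times> 'a poly \<Rightarrow> 'a poly \<times> 'a poly" where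
  "mat2_act a b c d F = (smult a (fst F) + smult b (snd F), smult c (fst F) + smult d (snd F))"

lemma mat2_act_mat2_act:
  "mat2_act a b c d (mat2_act a' b' c' d' F) =
     mat2_act (a*a' + b*c') (a*b' + b*d') (c*a' + d*c') (c*b' + d*d') F"
  by (simp add: mat2_act_def algebra_simps smult_add_right smult_add_left)

lemma mat2_act_id [simp]: "mat2_act 1 0 0 1 F = F"
  by (simp add: mat2_act_def)

lemma mat2_act_scalar: "mat2_act c 0 0 c F = (smult c (fst F), smult c (snd F))"
  by (simp add: mat2_act_def)

lemma lam_sq_eq_mat2_act: "lam_sq l g = mat2_act 1 0 0 (inverse (l^2)) g"
  by (simp add: lam_sq_def mat2_act_def)

lemma lam_sq_one [simp]: "lam_sq 1 g = g"
  by (simp add: lam_sq_def)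

lemma lam_sq_lam_sq: "lam_sq l (lam_sq m g) = lam_sq (l*m) g"
  by (simp add: lam_sq_def power_mult_distrib)

lemma lam_sq_inverse: "(l::'k::field) \<noteq> 0 \<Longrightarrow> lam_sq (inverse l) (lam_sq l g) = g"
  by (simp add: lam_sq_lam_sq)

lemma mat2_inverse_eqs:
  fixes a b c d :: "'k::field"
  assumes "a*d - b*c = D" "D \<noteq> 0"
  shows "(d/D)*a + (-b/D)*c = 1" "(d/D)*b + (-b/D)*d = 0"
    "(-c/D)*a + (a/D)*c = 0" "(-c/D)*b + (a/D)*d = 1"
  using assms by (simp_all add: field_simps)

lemma unimodular_pair_field:
  fixes a b :: "'k::field"
  assumes "a \<noteq> 0 \<or> b \<noteq> 0"
  obtains x y where "x*a + y*b = 1"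
proof (cases "a = 0")
  case True
  with assms show ?thesis using that[of 0 "inverse b"] by simp
next
  case False
  then show ?thesis using that[of "inverse a" 0] by simp
qed

subsection \<open>The Sylvester matrix under the action of 2\<times>2 matrices\<close>

abbreviation sylvester_nn :: "nat \<Rightarrow> 'a::comm_ring_1 poly \<times> 'a poly \<Rightarrow> 'a mat" where
  "sylvester_nn n F \<equiv> sylvester_mat_sub n n (fst F) (snd F)"

abbreviation res_pair :: "nat \<Rightarrow> 'a::comm_ring_1 poly \<times> 'a poly \<Rightarrow> 'a" where
  "res_pair n F \<equiv> res_nn n (fst F) (snd F)"

text \<open>The block matrix \<open>[[a I, b I], [c I, d I]]\<close> with \<open>n \<times> n\<close> identity blocks.\<close>
definition block_mat2 :: "nat \<Rightarrow> 'a::comm_ring_1 \<Rightarrow> 'a \<Rightarrow> 'a \<Rightarrow> 'a \<Rightarrow> 'a mat" where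
  "block_mat2 n a b c d = mat (n+n) (n+n) (\<lambda>(i,k).
     if i < n then (if k = i then a else 0) + (if k = i + n then b else 0)
     else (if k + n = i then c else 0) + (if k = i then d else 0))"

lemma sum_two_deltas:
  fixes f :: "nat \<Rightarrow> 'a::comm_ring_1"
  assumes "p < N" "q < N" "p \<noteq> q"
  shows "(\<Sum>k\<in>{0..<N}. ((if k = p then a else 0) + (if k = q then b else 0)) * f k) = a * f p + b * f q"
  using assms
  by (simp add: distrib_right sum.distrib if_distrib[where f="\<lambda>x. x * _"] sum.delta cong: if_cong)

lemma sylvester_nn_mat2_act:
  "sylvester_nn n (mat2_act a b c d F) = block_mat2 n a b c d * sylvester_nn n F"
proof (rule eq_matI)
  fix i j assume "i < dim_row (block_mat2 n a b c d * sylvester_nn n F)"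
    "j < dim_col (block_mat2 n a b c d * sylvester_nn n F)"
  hence i: "i < n+n" and j: "j < n+n" by (auto simp: block_mat2_def)
  let ?S = "sylvester_nn n F"
  have "(block_mat2 n a b c d * ?S) $$ (i,j) = (\<Sum>k\<in>{0..<n+n}. block_mat2 n a b c d $$ (i,k) * ?S $$ (k,j))"
    using i j by (simp add: block_mat2_def scalar_prod_def)
  also have "\<dots> = (\<Sum>k\<in>{0..<n+n}. (if i < n then (if k = i then a else 0) + (if k = i + n then b else 0)
      else (if k = i - n then c else 0) + (if k = i then d else 0)) * ?S $$ (k,j))"
    using i by (intro sum.cong) (auto simp: block_mat2_def)
  also have "\<dots> = (if i < n then a * ?S $$ (i,j) + b * ?S $$ (i+n,j) else c * ?S $$ (i-n,j) + d * ?S $$ (i,j))"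
    using i by (cases "i < n") (simp_all add: sum_two_deltas)
  also have "\<dots> = sylvester_nn n (mat2_act a b c d F) $$ (i,j)"
    using i j by (cases "i < n") (auto simp: sylvester_mat_sub_index mat2_act_def algebra_simps)
  finally show "sylvester_nn n (mat2_act a b c d F) $$ (i,j) = (block_mat2 n a b c d * ?S) $$ (i,j)" ..
qed (auto simp: block_mat2_def)

lemma sylvester_mat_sub_monom_one: "sylvester_mat_sub n n (monom 1 n) 1 = 1\<^sub>m (n+n)"
  by (rule eq_matI) (auto simp: sylvester_mat_sub_index coeff_monom coeff_1)

lemma res_pair_mat2_act: "res_pair n (mat2_act a b c d F) = det (block_mat2 n a b c d) * res_pair n F"
  unfolding res_nn_def resultant_sub_def sylvester_nn_mat2_act
  by (rule det_mult) (auto simp: block_mat2_def)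

text \<open>Since \<open>(X\<^sup>n, 1)\<close> has the identity as Sylvester matrix, multiplicativity of the
  action turns an inverse matrix into an inverse of the block determinant.\<close>
lemma det_block_mat2_inverse:
  assumes "a'*a + b'*c = 1" "a'*b + b'*d = 0" "c'*a + d'*c = 0" "c'*b + d'*d = (1::'a::comm_ring_1)"
  shows "det (block_mat2 n a' b' c' d') * det (block_mat2 n a b c d) = 1"
proof -
  let ?F0 = "(monom 1 n, 1) :: 'a poly \<times> 'a poly"
  have res_F0: "res_pair n ?F0 = 1"
    unfolding res_nn_def resultant_sub_def by (simp add: sylvester_mat_sub_monom_one)
  have "res_pair n (mat2_act a' b' c' d' (mat2_act a b c d ?F0)) = res_pair n ?F0"
    unfolding mat2_act_mat2_act assms mat2_act_id ..
  thus ?thesis unfolding res_pair_mat2_act res_F0 by (simp add: mult.assoc)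
qed

lemma res_pair_mat2_act_unit:
  assumes "a'*a + b'*c = 1" "a'*b + b'*d = 0" "c'*a + d'*c = 0" "c'*b + d'*d = (1::'a::comm_ring_1)"
    and "res_pair n F dvd 1"
  shows "res_pair n (mat2_act a b c d F) dvd 1"
proof -
  have "det (block_mat2 n a b c d) dvd 1"
    using det_block_mat2_inverse[OF assms(1-4)] by (metis dvd_triv_right)
  thus ?thesis unfolding res_pair_mat2_act using assms(5) by simp
qed

text \<open>Laplace expansion along the first column, which contains only the two leading coefficients.\<close>
lemma res_pair_leading_coeff_comb:
  fixes F :: "'a::comm_ring_1 poly \<times> 'a poly"
  assumes "n > 0"
  obtains x y where "res_pair n F = coeff (fst F) n * x + coeff (snd F) n * y"
proof -
  let ?S = "sylvester_nn n F"
  have "res_pair n F = (\<Sum>i<n+n. ?S $$ (i,0) * cofactor ?S i 0)"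
    unfolding res_nn_def resultant_sub_def using assms by (intro laplace_expansion_column) auto
  also have "\<dots> = (\<Sum>i\<in>{0..<n+n}. ((if i = 0 then coeff (fst F) n else 0)
      + (if i = n then coeff (snd F) n else 0)) * cofactor ?S i 0)"
    unfolding lessThan_atLeast0 using assms by (intro sum.cong) (auto simp: sylvester_mat_sub_index)
  also have "\<dots> = coeff (fst F) n * cofactor ?S 0 0 + coeff (snd F) n * cofactor ?S n 0"
    using assms by (intro sum_two_deltas) auto
  finally show ?thesis by (rule that)
qed

definition lift_pair :: "'k::comm_ring_1 poly \<times> 'k poly \<Rightarrow> 'k poly poly \<times> 'k poly poly" where
  "lift_pair F = (map_poly (\<lambda>c. [:c:]) (fst F), map_poly (\<lambda>c. [:c:]) (snd F))"

lemma coeff_evalT [simp]: "coeff (evalT t P) i = poly (coeff P i) t"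
  by (simp add: evalT_def coeff_map_poly)

lemma degree_evalT_le: "degree (evalT t P) \<le> degree P"
  unfolding evalT_def by (rule degree_map_poly_le)

lemma evalT_pair_mat2_act:
  "evalT_pair t (mat2_act p q r s H) = mat2_act (poly p t) (poly q t) (poly r t) (poly s t) (evalT_pair t H)"
  by (auto simp: evalT_pair_def mat2_act_def algebra_simps intro!: poly_eqI)

lemma coeff_map_poly_pCons0 [simp]: "coeff (map_poly (\<lambda>c. [:c:]) A) i = [:coeff A i:]"
  by (simp add: coeff_map_poly)

lemma degree_map_poly_pCons0 [simp]: "degree (map_poly (\<lambda>c. [:c:]) A) = degree A"
  by (rule degree_map_poly) auto

lemma evalT_pair_lift_pair [simp]: "evalT_pair t (lift_pair F) = F"
  by (auto simp: evalT_pair_def lift_pair_def prod_eq_iff intro!: poly_eqI)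

lemma res_pair_evalT_pair: "res_pair n (evalT_pair t H) = poly (res_pair n H) t"
proof -
  have hom: "comm_ring_hom (\<lambda>p. poly p t)" by unfold_locales auto
  have "sylvester_nn n (evalT_pair t H) = map_mat (\<lambda>c. poly c t) (sylvester_nn n H)"
    by (simp add: evalT_pair_def evalT_def sylvester_mat_sub_map)
  thus ?thesis unfolding res_nn_def resultant_sub_def by (simp add: comm_ring_hom.hom_det[OF hom])
qed

lemma res_pair_lift_pair: "res_pair n (lift_pair F) = [:res_pair n F:]"
proof -
  have hom: "comm_ring_hom (\<lambda>c::'a. [:c:])" by unfold_locales (auto simp: one_pCons)
  have "sylvester_nn n (lift_pair F) = map_mat (\<lambda>c. [:c:]) (sylvester_nn n F)"
    by (simp add: lift_pair_def sylvester_mat_sub_map)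
  thus ?thesis unfolding res_nn_def resultant_sub_def by (simp add: comm_ring_hom.hom_det[OF hom])
qed

lemma poly_nonzero_if_dvd_one:
  fixes p :: "'k::field poly"
  assumes "p dvd 1" shows "poly p t \<noteq> 0"
proof -
  from assms obtain w where "1 = p * w" by (auto simp: dvd_def)
  hence "1 = poly p t * poly w t" by (metis poly_1 poly_mult)
  thus ?thesis by auto
qed

lemma degree_smult_add_smult_le:
  "degree X \<le> n \<Longrightarrow> degree Y \<le> n \<Longrightarrow> degree (smult a X + smult b Y) \<le> n"
  by (meson degree_add_le degree_smult_le order_trans)

lemma degree_mat2_act_le:
  "degree (fst F) \<le> n \<Longrightarrow> degree (snd F) \<le> n \<Longrightarrow>
     degree (fst (mat2_act a b c d F)) \<le> n \<and> degree (snd (mat2_act a b c d F)) \<le> n"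
  by (simp add: mat2_act_def degree_smult_add_smult_le)

lemma coeffs_unimodularI:
  assumes "j \<le> n" "u * coeff X j + v * coeff Y j = (1::'a::comm_ring_1)"
  shows "\<exists>c d :: nat \<Rightarrow> 'a. (\<Sum>i\<le>n. c i * coeff X i + d i * coeff Y i) = 1"
proof (intro exI)
  have "(\<Sum>i\<le>n. (if i = j then u else 0) * coeff X i + (if i = j then v else 0) * coeff Y i)
     = (\<Sum>i\<le>n. if i = j then u * coeff X j + v * coeff Y j else 0)"
    by (rule sum.cong) auto
  also have "\<dots> = 1" using assms by (simp add: sum.delta)
  finally show "(\<Sum>i\<le>n. (if i = j then u else 0) * coeff X i + (if i = j then v else 0) * coeff Y i) = 1" .
qed

subsection \<open>Unpointed maps and the action of \<open>SL\<^sub>2(k)\<close>\<close>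

lemma unpointed_map_leading_coeff:
  fixes F :: "'k::field poly \<times> 'k poly"
  assumes F: "unpointed_map n F"
  shows "coeff (fst F) n \<noteq> 0 \<or> coeff (snd F) n \<noteq> 0"
proof (cases "n = 0")
  case True
  with F have "fst F = [:coeff (fst F) n:]" "snd F = [:coeff (snd F) n:]"
    unfolding unpointed_map_def by (metis degree_0_id le_zero_eq)+
  with F show ?thesis by (cases F) (auto simp: unpointed_map_def)
next
  case False
  then obtain x y where "res_pair n F = coeff (fst F) n * x + coeff (snd F) n * y"
    using res_pair_leading_coeff_comb by blast
  with F show ?thesis by (auto simp: unpointed_map_def)
qed

lemma unpointed_map_mat2_act:
  fixes F :: "'k::field poly \<times> 'k poly"
  assumes F: "unpointed_map n F" and D: "a*d - b*c \<noteq> 0"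
  shows "unpointed_map n (mat2_act a b c d F)"
proof -
  note inv = mat2_inverse_eqs[OF HOL.refl D]
  have "res_pair n (mat2_act a b c d F) dvd 1"
    by (rule res_pair_mat2_act_unit[OF inv]) (use F in \<open>simp add: unpointed_map_def dvd_field_iff\<close>)
  moreover have "mat2_act a b c d F \<noteq> (0,0)"
  proof
    let ?D = "a*d - b*c"
    assume "mat2_act a b c d F = (0,0)"
    hence "mat2_act (d/?D) (-b/?D) (-c/?D) (a/?D) (mat2_act a b c d F) = (0,0)"
      by (simp add: mat2_act_def)
    hence "F = (0,0)" unfolding mat2_act_mat2_act inv mat2_act_id .
    with F show False by (simp add: unpointed_map_def)
  qed
  ultimately show ?thesis using F degree_mat2_act_le[of F n]
    by (auto simp: unpointed_map_def dvd_field_iff)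
qed

lemma unpointed_htpy_mat2_act_poly:
  fixes F :: "'k::field poly \<times> 'k poly" and p q r s p' q' r' s' :: "'k poly"
  assumes F: "unpointed_map n F"
    and inv: "p'*p + q'*r = 1" "p'*q + q'*s = 0" "r'*p + s'*r = 0" "r'*q + s'*s = 1"
  shows "unpointed_htpy n (mat2_act (poly p 0) (poly q 0) (poly r 0) (poly s 0) F)
                          (mat2_act (poly p 1) (poly q 1) (poly r 1) (poly s 1) F)"
proof -
  define H where "H = mat2_act p q r s (lift_pair F)"
  have "unpointed_homotopy n H"
    unfolding unpointed_homotopy_def
  proof (intro conjI)
    show "degree (fst H) \<le> n" "degree (snd H) \<le> n"
      using F degree_mat2_act_le[of "lift_pair F" n]
      by (auto simp: H_def lift_pair_def unpointed_map_def)
    have "[:res_pair n F:] dvd 1" using F by (simp add: is_unit_const_poly_iff unpointed_map_def)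
    thus "res_pair n H dvd 1" unfolding H_def using res_pair_mat2_act_unit[OF inv] res_pair_lift_pair by metis
    define a where "a = coeff (fst F) n"
    define b where "b = coeff (snd F) n"
    obtain x y where xy: "x*a + y*b = 1"
      using unimodular_pair_field unpointed_map_leading_coeff[OF F] unfolding a_def b_def by blast
    have "coeff (fst H) n = p * [:a:] + q * [:b:]" "coeff (snd H) n = r * [:a:] + s * [:b:]"
      by (simp_all add: H_def mat2_act_def lift_pair_def a_def b_def)
    hence "([:x:]*p' + [:y:]*r') * coeff (fst H) n + ([:x:]*q' + [:y:]*s') * coeff (snd H) n
        = [:x:] * ((p'*p + q'*r) * [:a:] + (p'*q + q'*s) * [:b:])
          + [:y:] * ((r'*p + s'*r) * [:a:] + (r'*q + s'*s) * [:b:])"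
      by (simp add: algebra_simps)
    also have "\<dots> = [:x*a + y*b:]" using inv by (simp add: algebra_simps)
    also have "\<dots> = 1" using xy by (simp add: one_pCons)
    finally show "\<exists>c d :: nat \<Rightarrow> 'k poly. (\<Sum>i\<le>n. c i * coeff (fst H) i + d i * coeff (snd H) i) = 1"
      by (rule coeffs_unimodularI[OF order_refl])
  qed
  from unpointed_htpy.htpy[OF this] show ?thesis unfolding H_def evalT_pair_mat2_act evalT_pair_lift_pair .
qed

lemma unpointed_htpy_upper_shear:
  fixes F :: "'k::field poly \<times> 'k poly"
  assumes "unpointed_map n F"
  shows "unpointed_htpy n F (mat2_act 1 b 0 1 F)"
  using unpointed_htpy_mat2_act_poly[OF assms, where p=1 and q="[:0,b:]" and r=0 and s=1
      and p'=1 and q'="-[:0,b:]" and r'=0 and s'=1] by simp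

lemma unpointed_htpy_lower_shear:
  fixes F :: "'k::field poly \<times> 'k poly"
  assumes "unpointed_map n F"
  shows "unpointed_htpy n F (mat2_act 1 0 c 1 F)"
  using unpointed_htpy_mat2_act_poly[OF assms, where p=1 and q=0 and r="[:0,c:]" and s=1
      and p'=1 and q'=0 and r'="-[:0,c:]" and s'=1] by simp

text \<open>For \<open>c \<noteq> 0\<close>: \<open>[[a,b],[c,d]] = [[1,(a-1)/c],[0,1]] [[1,0],[c,1]] [[1,(d-1)/c],[0,1]]\<close>.\<close>
lemma unpointed_htpy_SL2_lower_nonzero:
  fixes F :: "'k::field poly \<times> 'k poly"
  assumes F: "unpointed_map n F" and det: "a*d - b*c = 1" and c: "c \<noteq> 0"
  shows "unpointed_htpy n F (mat2_act a b c d F)"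
proof -
  define G1 where "G1 = mat2_act 1 ((d-1)/c) 0 1 F"
  define G2 where "G2 = mat2_act 1 0 c 1 G1"
  have G1: "unpointed_map n G1" unfolding G1_def by (rule unpointed_map_mat2_act[OF F]) simp
  have G2: "unpointed_map n G2" unfolding G2_def by (rule unpointed_map_mat2_act[OF G1]) simp
  have "unpointed_htpy n F G1" "unpointed_htpy n G1 G2"
    "unpointed_htpy n G2 (mat2_act 1 ((a-1)/c) 0 1 G2)"
    using unpointed_htpy_upper_shear[OF F] unpointed_htpy_lower_shear[OF G1]
      unpointed_htpy_upper_shear[OF G2] unfolding G1_def G2_def by blast+
  moreover have "mat2_act 1 ((a-1)/c) 0 1 G2 = mat2_act a b c d F"
    unfolding G2_def G1_def mat2_act_mat2_act using det c by (simp add: field_simps)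
  ultimately show ?thesis by (metis unpointed_htpy.trans)
qed

lemma unpointed_htpy_SL2:
  fixes F :: "'k::field poly \<times> 'k poly"
  assumes F: "unpointed_map n F" and det: "a*d - b*c = 1"
  shows "unpointed_htpy n F (mat2_act a b c d F)"
proof (cases "c = 0")
  case False
  with unpointed_htpy_SL2_lower_nonzero[OF F det] show ?thesis by blast
next
  case True
  hence a: "a \<noteq> 0" using det by auto
  have det': "a*(b+d) - b*a = 1" using det True by (simp add: algebra_simps)
  have "unpointed_htpy n F (mat2_act a b a (b+d) F)"
    by (rule unpointed_htpy_SL2_lower_nonzero[OF F det' a])
  moreover have "unpointed_htpy n (mat2_act a b a (b+d) F) (mat2_act 1 0 (-1) 1 (mat2_act a b a (b+d) F))"
    by (intro unpointed_htpy_lower_shear unpointed_map_mat2_act[OF F]) (use det' in simp)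
  moreover have "mat2_act 1 0 (-1) 1 (mat2_act a b a (b+d) F) = mat2_act a b c d F"
    unfolding mat2_act_mat2_act using True by simp
  ultimately show ?thesis by (metis unpointed_htpy.trans)
qed

lemma monic_degree_eqI:
  fixes X :: "'a::comm_ring_1 poly"
  assumes "degree X \<le> n" "coeff X n = 1"
  shows "monic X \<and> degree X = n"
proof -
  have "degree X \<ge> n" using assms(2) by (metis le_degree zero_neq_one)
  hence "degree X = n" using assms(1) by simp
  thus ?thesis using assms(2) by simp
qed

lemma degree_less_if_coeff_eq_0:
  fixes X :: "'a::comm_ring_1 poly"
  assumes "degree X \<le> n" "coeff X n = 0"
  shows "X = 0 \<or> degree X < n"
  using assms le_neq_implies_less by fastforce

lemma pointed_rfI:
  fixes F :: "'a::comm_ring_1 poly \<times> 'a poly"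
  assumes "degree (fst F) \<le> n" "degree (snd F) \<le> n" "coeff (fst F) n = 1" "coeff (snd F) n = 0"
    and "res_pair n F dvd 1"
  shows "pointed_rf n F"
  using assms monic_degree_eqI[of "fst F" n] degree_less_if_coeff_eq_0[of "snd F" n]
  by (auto simp: pointed_rf_def)

lemma pointed_rf_coeffs:
  fixes F :: "'a::comm_ring_1 poly \<times> 'a poly"
  assumes "pointed_rf n F"
  shows "coeff (fst F) n = 1" "coeff (snd F) n = 0" "degree (fst F) \<le> n" "degree (snd F) \<le> n"
  using assms by (auto simp: pointed_rf_def coeff_eq_0)

lemma pointed_rf_imp_unpointed_map:
  fixes F :: "'k::field poly \<times> 'k poly"
  assumes "pointed_rf n F"
  shows "unpointed_map n F"
  using assms by (auto simp: unpointed_map_def pointed_rf_def dvd_field_iff)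

lemma pointed_rf_normalize:
  fixes H :: "'a::comm_ring_1 poly \<times> 'a poly"
  assumes "degree (fst H) \<le> n" "degree (snd H) \<le> n" "res_pair n H dvd 1"
    and uv: "u * coeff (fst H) n + v * coeff (snd H) n = 1"
  shows "pointed_rf n (mat2_act u v (- coeff (snd H) n) (coeff (fst H) n) H)"
proof (rule pointed_rfI)
  let ?G = "mat2_act u v (- coeff (snd H) n) (coeff (fst H) n) H"
  show "degree (fst ?G) \<le> n" "degree (snd ?G) \<le> n"
    using degree_mat2_act_le[OF assms(1,2)] by blast+
  show "coeff (fst ?G) n = 1" "coeff (snd ?G) n = 0"
    using uv by (simp_all add: mat2_act_def algebra_simps)
  show "res_pair n ?G dvd 1"
    by (rule res_pair_mat2_act_unit[where a'="coeff (fst H) n" and b'="-v" and c'="coeff (snd H) n" and d'=u])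
      (use uv assms(3) in \<open>auto simp: algebra_simps\<close>)
qed

lemma exists_SL2_pointed:
  fixes F :: "'k::field poly \<times> 'k poly"
  assumes F: "unpointed_map n F"
  obtains a b c d where "a*d - b*c = 1" "pointed_rf n (mat2_act a b c d F)"
proof -
  obtain u v where uv: "u * coeff (fst F) n + v * coeff (snd F) n = 1"
    using unimodular_pair_field unpointed_map_leading_coeff[OF F] by blast
  have "pointed_rf n (mat2_act u v (- coeff (snd F) n) (coeff (fst F) n) F)"
    by (rule pointed_rf_normalize[OF _ _ _ uv]) (use F in \<open>auto simp: unpointed_map_def dvd_field_iff\<close>)
  moreover have "u * coeff (fst F) n - v * (- coeff (snd F) n) = 1" using uv by simp
  ultimately show ?thesis by (rule that[rotated])
qed

lemma exists_pointed_unpointed_htpy: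
  fixes F :: "'k::field poly \<times> 'k poly"
  assumes "unpointed_map n F"
  shows "\<exists>G. pointed_rf n G \<and> unpointed_htpy n F G"
  by (metis exists_SL2_pointed[OF assms] unpointed_htpy_SL2[OF assms])


lemma pointed_rf_imp_unpointed_homotopy:
  fixes H :: "'k::field poly poly \<times> 'k poly poly"
  assumes "pointed_rf n H"
  shows "unpointed_homotopy n H"
  unfolding unpointed_homotopy_def
proof (intro conjI)
  note coeffs = pointed_rf_coeffs[OF assms]
  show "degree (fst H) \<le> n" "degree (snd H) \<le> n" using coeffs by auto
  show "res_pair n H dvd 1" using assms by (simp add: pointed_rf_def)
  show "\<exists>c d :: nat \<Rightarrow> 'k poly. (\<Sum>i\<le>n. c i * coeff (fst H) i + d i * coeff (snd H) i) = 1"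
    by (rule coeffs_unimodularI[of n n 1 _ 0]) (use coeffs in auto)
qed

lemma pointed_htpy_imp_unpointed_htpy:
  fixes F G :: "'k::field poly \<times> 'k poly"
  assumes "pointed_htpy n F G"
  shows "unpointed_htpy n F G"
  using assms
proof induction
  case (refl F) thus ?case by (intro unpointed_htpy.refl pointed_rf_imp_unpointed_map)
next
  case (htpy H) thus ?case by (intro unpointed_htpy.htpy pointed_rf_imp_unpointed_homotopy)
qed (blast intro: unpointed_htpy.sym unpointed_htpy.trans)+

text \<open>Up to the scalar \<open>\<lambda>\<close>, \<open>\<lambda>\<^sup>2g\<close> is \<open>diag(\<lambda>, \<lambda>\<^sup>-\<^sup>1)\<close> applied to \<open>g\<close>.\<close>
lemma unpointed_htpy_lam_sq:
  fixes g :: "'k::field poly \<times> 'k poly"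
  assumes g: "unpointed_map n g" and l: "l \<noteq> 0"
  shows "unpointed_htpy n (lam_sq l g) g"
proof -
  have "unpointed_map n (lam_sq l g)"
    unfolding lam_sq_eq_mat2_act by (rule unpointed_map_mat2_act[OF g]) (use l in simp)
  hence "unpointed_htpy n (lam_sq l g) (mat2_act l 0 0 l (lam_sq l g))"
    unfolding mat2_act_scalar using l by (rule unpointed_htpy.scal)
  moreover have "mat2_act l 0 0 l (lam_sq l g) = mat2_act l 0 0 (1/l) g"
    using l by (simp add: lam_sq_eq_mat2_act mat2_act_mat2_act power2_eq_square field_simps)
  moreover have "unpointed_htpy n g (mat2_act l 0 0 (1/l) g)"
    by (rule unpointed_htpy_SL2[OF g]) (use l in simp)
  ultimately show ?thesis by (metis unpointed_htpy.sym unpointed_htpy.trans)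
qed

lemma pointed_rf_evalT_pair:
  fixes H :: "'k::field poly poly \<times> 'k poly poly"
  assumes H: "pointed_rf n H"
  shows "pointed_rf n (evalT_pair t H)"
proof (rule pointed_rfI)
  note coeffs = pointed_rf_coeffs[OF H]
  show "degree (fst (evalT_pair t H)) \<le> n" "degree (snd (evalT_pair t H)) \<le> n"
    using coeffs degree_evalT_le[of t] by (auto simp: evalT_pair_def intro: order_trans)
  show "coeff (fst (evalT_pair t H)) n = 1" "coeff (snd (evalT_pair t H)) n = 0"
    using coeffs by (simp_all add: evalT_pair_def)
  show "res_pair n (evalT_pair t H) dvd 1" unfolding res_pair_evalT_pair
    using H by (simp add: dvd_field_iff poly_nonzero_if_dvd_one pointed_rf_def)
qed

lemma pointed_rf_mat2_act_diag:
  fixes H :: "'a::comm_ring_1 poly \<times> 'a poly"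
  assumes H: "pointed_rf n H" and "d' * d = 1"
  shows "pointed_rf n (mat2_act 1 0 0 d H)"
proof (rule pointed_rfI)
  note coeffs = pointed_rf_coeffs[OF H]
  show "degree (fst (mat2_act 1 0 0 d H)) \<le> n" "degree (snd (mat2_act 1 0 0 d H)) \<le> n"
    using degree_mat2_act_le[OF coeffs(3,4)] by blast+
  show "coeff (fst (mat2_act 1 0 0 d H)) n = 1" "coeff (snd (mat2_act 1 0 0 d H)) n = 0"
    using coeffs by (simp_all add: mat2_act_def)
  show "res_pair n (mat2_act 1 0 0 d H) dvd 1"
    by (rule res_pair_mat2_act_unit[where a'=1 and b'=0 and c'=0 and d'=d'])
      (use assms in \<open>auto simp: pointed_rf_def\<close>)
qed

lemma pointed_htpy_lam_sq:
  fixes F G :: "'k::field poly \<times> 'k poly"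
  assumes "pointed_htpy n F G" "l \<noteq> 0"
  shows "pointed_htpy n (lam_sq l F) (lam_sq l G)"
  using assms(1)
proof induction
  case (refl F)
  have "pointed_rf n (lam_sq l F)"
    unfolding lam_sq_eq_mat2_act by (rule pointed_rf_mat2_act_diag[OF refl, of "l^2"]) (use assms(2) in simp)
  thus ?case by (rule pointed_htpy.refl)
next
  case (htpy H)
  have "pointed_rf n (mat2_act 1 0 0 [:inverse (l^2):] H)"
    by (rule pointed_rf_mat2_act_diag[OF htpy, of "[:l^2:]"]) (use assms(2) in \<open>simp add: one_pCons\<close>)
  from pointed_htpy.htpy[OF this] show ?case
    unfolding evalT_pair_mat2_act by (simp add: lam_sq_eq_mat2_act)
qed (blast intro: pointed_htpy.sym pointed_htpy.trans)+

definition pointed_htpy_sq :: "nat \<Rightarrow> 'k::field poly \<times> 'k poly \<Rightarrow> 'k poly \<times> 'k poly \<Rightarrow> bool" where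
  "pointed_htpy_sq n f g \<longleftrightarrow> (\<exists>l. l \<noteq> 0 \<and> pointed_htpy n f (lam_sq l g))"

lemma pointed_htpy_sqI: "pointed_htpy n f g \<Longrightarrow> pointed_htpy_sq n f g"
  unfolding pointed_htpy_sq_def by (intro exI[of _ 1]) simp

lemma pointed_htpy_sq_sym:
  assumes "pointed_htpy_sq n f g" shows "pointed_htpy_sq n g f"
proof -
  obtain l where l: "l \<noteq> 0" "pointed_htpy n f (lam_sq l g)"
    using assms unfolding pointed_htpy_sq_def by blast
  have "pointed_htpy n (lam_sq (inverse l) f) g"
    using pointed_htpy_lam_sq[OF l(2), of "inverse l"] l(1) by (simp add: lam_sq_inverse)
  thus ?thesis unfolding pointed_htpy_sq_def using l(1) by (intro exI[of _ "inverse l"]) (auto intro: pointed_htpy.sym)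
qed

lemma pointed_htpy_sq_trans:
  assumes "pointed_htpy_sq n f g" "pointed_htpy_sq n g h" shows "pointed_htpy_sq n f h"
proof -
  obtain l where l: "l \<noteq> 0" "pointed_htpy n f (lam_sq l g)"
    using assms(1) unfolding pointed_htpy_sq_def by blast
  obtain m where m: "m \<noteq> 0" "pointed_htpy n g (lam_sq m h)"
    using assms(2) unfolding pointed_htpy_sq_def by blast
  have "pointed_htpy n (lam_sq l g) (lam_sq (l*m) h)"
    using pointed_htpy_lam_sq[OF m(2) l(1)] by (simp add: lam_sq_lam_sq)
  thus ?thesis unfolding pointed_htpy_sq_def using l m by (intro exI[of _ "l*m"]) (auto intro: pointed_htpy.trans)
qed

subsection \<open>Pairs related by a matrix of square determinant\<close>

definition sq_det_rel :: "'k::field poly \<times> 'k poly \<Rightarrow> 'k poly \<times> 'k poly \<Rightarrow> bool" where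
  "sq_det_rel F G \<longleftrightarrow> (\<exists>a b c d \<mu>. \<mu> \<noteq> 0 \<and> a*d - b*c = \<mu>^2 \<and> G = mat2_act a b c d F)"

lemma sq_det_relI: "\<mu> \<noteq> 0 \<Longrightarrow> a*d - b*c = \<mu>^2 \<Longrightarrow> sq_det_rel F (mat2_act a b c d F)"
  unfolding sq_det_rel_def by blast

lemma sq_det_rel_refl: "sq_det_rel F F"
  using sq_det_relI[of 1 1 1 0 0 F] by simp

lemma sq_det_rel_scalar: "c \<noteq> 0 \<Longrightarrow> sq_det_rel F (smult c (fst F), smult c (snd F))"
  using sq_det_relI[of c c c 0 0 F] by (simp add: mat2_act_scalar power2_eq_square)

lemma sq_det_rel_trans:
  assumes "sq_det_rel F G" "sq_det_rel G H" shows "sq_det_rel F H"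
proof -
  obtain a b c d \<mu> where FG: "\<mu> \<noteq> 0" "a*d - b*c = \<mu>^2" "G = mat2_act a b c d F"
    using assms(1) unfolding sq_det_rel_def by blast
  obtain a' b' c' d' \<nu> where GH: "\<nu> \<noteq> 0" "a'*d' - b'*c' = \<nu>^2" "H = mat2_act a' b' c' d' G"
    using assms(2) unfolding sq_det_rel_def by blast
  have "(a'*a+b'*c)*(c'*b+d'*d) - (a'*b+b'*d)*(c'*a+d'*c) = (a'*d' - b'*c') * (a*d - b*c)"
    by (simp add: algebra_simps)
  also have "\<dots> = (\<nu>*\<mu>)^2" using FG GH by (simp add: power_mult_distrib)
  finally show ?thesis
    using sq_det_relI[of "\<nu>*\<mu>"] FG GH by (simp add: mat2_act_mat2_act)
qed

lemma sq_det_rel_sym: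
  assumes "sq_det_rel F G" shows "sq_det_rel G F"
proof -
  obtain a b c d \<mu> where M: "\<mu> \<noteq> 0" "a*d - b*c = \<mu>^2" "G = mat2_act a b c d F"
    using assms unfolding sq_det_rel_def by blast
  define D where "D = a*d - b*c"
  have D: "D \<noteq> 0" using M by (simp add: D_def)
  note inv = mat2_inverse_eqs[OF D_def[symmetric] D]
  have "F = mat2_act (d/D) (-b/D) (-c/D) (a/D) G" unfolding M(3) mat2_act_mat2_act inv mat2_act_id ..
  moreover have "(d/D)*(a/D) - (-b/D)*(-c/D) = (inverse \<mu>)^2"
    using M D by (simp add: D_def[symmetric] field_simps power2_eq_square)
  ultimately show ?thesis using sq_det_relI[of "inverse \<mu>"] M(1) by simp
qed

lemma sq_det_rel_SL2: "a*d - b*c = (1::'k::field) \<Longrightarrow> sq_det_rel F (mat2_act a b c d F)"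
  using sq_det_relI[of 1] by simp

text \<open>The relating matrix is necessarily \<open>[[1,b],[0,\<mu>\<^sup>2]]\<close>, and the homotopy
  \<open>[[1,b(1-T)],[0,\<mu>\<^sup>2]]\<close> deforms it to \<open>\<mu>\<^sup>-\<^sup>2\<close>-scaling.\<close>
lemma pointed_htpy_sq_if_sq_det_rel:
  fixes F G :: "'k::field poly \<times> 'k poly"
  assumes F: "pointed_rf n F" and G: "pointed_rf n G" and FG: "sq_det_rel F G"
  shows "pointed_htpy_sq n G F"
proof -
  obtain a b c d \<mu> where M: "\<mu> \<noteq> 0" "a*d - b*c = \<mu>^2" "G = mat2_act a b c d F"
    using FG unfolding sq_det_rel_def by blast
  note cF = pointed_rf_coeffs[OF F] and cG = pointed_rf_coeffs[OF G]
  have a: "a = 1" and c: "c = 0" using cF cG M(3) by (simp_all add: mat2_act_def)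
  with M have d: "d = \<mu>^2" by simp
  define H where "H = mat2_act 1 [:b,-b:] 0 [:d:] (lift_pair F)"
  have "pointed_rf n H"
  proof (rule pointed_rfI)
    have "degree (fst (lift_pair F)) \<le> n" "degree (snd (lift_pair F)) \<le> n"
      using cF by (simp_all add: lift_pair_def)
    thus "degree (fst H) \<le> n" "degree (snd H) \<le> n"
      unfolding H_def using degree_mat2_act_le by blast+
    show "coeff (fst H) n = 1" "coeff (snd H) n = 0" using cF by (simp_all add: H_def mat2_act_def lift_pair_def)
    have "[:res_pair n F:] dvd 1" unfolding is_unit_const_poly_iff using F by (simp add: pointed_rf_def)
    moreover have "[:1/d:] * [:d:] = (1::'k poly)" using d M(1) by (simp add: one_pCons)
    ultimately show "res_pair n H dvd 1" unfolding H_def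
      by (intro res_pair_mat2_act_unit[where a'=1 and b'="-[:b,-b:]*[:1/d:]" and c'=0 and d'="[:1/d:]"])
        (auto simp: res_pair_lift_pair algebra_simps)
  qed
  from pointed_htpy.htpy[OF this] have "pointed_htpy n (mat2_act 1 b 0 d F) (mat2_act 1 0 0 d F)"
    unfolding H_def evalT_pair_mat2_act evalT_pair_lift_pair by simp
  moreover have "mat2_act 1 b 0 d F = G" using M a c by simp
  moreover have "mat2_act 1 0 0 d F = lam_sq (inverse \<mu>) F" using d by (simp add: lam_sq_eq_mat2_act power_inverse)
  ultimately show ?thesis unfolding pointed_htpy_sq_def using M(1) by (intro exI[of _ "inverse \<mu>"]) auto
qed

subsection \<open>From unpointed to pointed homotopies\<close>

lemma unpointed_homotopy_evalT_pair:
  fixes H :: "'k::field poly poly \<times> 'k poly poly"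
  assumes "unpointed_homotopy n H"
  shows "unpointed_map n (evalT_pair t H)"
proof -
  from assms obtain c d :: "nat \<Rightarrow> 'k poly"
    where u: "(\<Sum>i\<le>n. c i * coeff (fst H) i + d i * coeff (snd H) i) = 1"
      and deg: "degree (fst H) \<le> n" "degree (snd H) \<le> n" and res: "res_pair n H dvd 1"
    unfolding unpointed_homotopy_def by blast
  have "(\<Sum>i\<le>n. poly (c i) t * coeff (fst (evalT_pair t H)) i + poly (d i) t * coeff (snd (evalT_pair t H)) i) = 1"
    using arg_cong[OF u, of "\<lambda>p. poly p t"] by (simp add: poly_sum evalT_pair_def)
  hence "evalT_pair t H \<noteq> (0,0)" by auto
  moreover have "res_pair n (evalT_pair t H) \<noteq> 0"
    unfolding res_pair_evalT_pair using res by (rule poly_nonzero_if_dvd_one)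
  moreover have "degree (fst (evalT_pair t H)) \<le> n" "degree (snd (evalT_pair t H)) \<le> n"
    using deg degree_evalT_le[of t] by (auto simp: evalT_pair_def intro: order_trans)
  ultimately show ?thesis by (simp add: unpointed_map_def)
qed

lemma unpointed_htpy_imp_unpointed_map:
  fixes F G :: "'k::field poly \<times> 'k poly"
  assumes "unpointed_htpy n F G"
  shows "unpointed_map n F \<and> unpointed_map n G"
  using assms
proof induction
  case (scal F c)
  have "unpointed_map n (mat2_act c 0 0 c F)"
    by (rule unpointed_map_mat2_act[OF scal(1)]) (use scal(2) in simp)
  with scal show ?case by (simp add: mat2_act_scalar)
qed (auto simp: unpointed_homotopy_evalT_pair)

text \<open>For \<open>n = 0\<close> the resultant is trivially \<open>1\<close> and the unimodularity of the coefficient vector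
  is needed instead.\<close>
lemma unpointed_homotopy_leading_coeffs:
  fixes H :: "'k::field poly poly \<times> 'k poly poly"
  assumes H: "unpointed_homotopy n H"
  obtains u v where "u * coeff (fst H) n + v * coeff (snd H) n = 1"
proof (cases "n = 0")
  case True
  with H show ?thesis using that by (auto simp: unpointed_homotopy_def)
next
  case False
  then obtain x y where eq: "res_pair n H = coeff (fst H) n * x + coeff (snd H) n * y"
    using res_pair_leading_coeff_comb by blast
  from H obtain w where "1 = res_pair n H * w" by (auto simp: unpointed_homotopy_def dvd_def)
  hence "(x * w) * coeff (fst H) n + (y * w) * coeff (snd H) n = 1"
    unfolding eq by (simp add: algebra_simps)
  thus ?thesis by (rule that)
qed

lemma unpointed_homotopy_normalize:
  fixes H :: "'k::field poly poly \<times> 'k poly poly"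
  assumes H: "unpointed_homotopy n H"
  obtains H' where "pointed_rf n H'" "\<And>t. sq_det_rel (evalT_pair t H) (evalT_pair t H')"
proof -
  let ?\<alpha> = "coeff (fst H) n" and ?\<beta> = "coeff (snd H) n"
  obtain u v where uv: "u * ?\<alpha> + v * ?\<beta> = 1"
    using unpointed_homotopy_leading_coeffs[OF H] by blast
  let ?H' = "mat2_act u v (-?\<beta>) ?\<alpha> H"
  have "pointed_rf n ?H'"
    by (rule pointed_rf_normalize[OF _ _ _ uv]) (use H in \<open>auto simp: unpointed_homotopy_def\<close>)
  moreover have "sq_det_rel (evalT_pair t H) (evalT_pair t ?H')" for t
  proof -
    have "poly u t * poly ?\<alpha> t - poly v t * poly (-?\<beta>) t = poly (u * ?\<alpha> + v * ?\<beta>) t" by simp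
    hence "poly u t * poly ?\<alpha> t - poly v t * poly (-?\<beta>) t = 1" unfolding uv by simp
    thus ?thesis unfolding evalT_pair_mat2_act by (rule sq_det_rel_SL2)
  qed
  ultimately show ?thesis by (rule that)
qed

lemma pointed_htpy_sq_if_common_sq_det_rel:
  fixes F P Q :: "'k::field poly \<times> 'k poly"
  assumes "pointed_rf n P" "pointed_rf n Q" "sq_det_rel F P" "sq_det_rel F Q"
  shows "pointed_htpy_sq n P Q"
proof -
  have "sq_det_rel Q P" using sq_det_rel_trans[OF sq_det_rel_sym[OF assms(4)] assms(3)] .
  then show ?thesis by (rule pointed_htpy_sq_if_sq_det_rel[OF assms(2,1)])
qed

text \<open>Quantifying over all pointed representatives of both ends lets the transitivity step
  choose one for the middle map.\<close>
lemma unpointed_htpy_imp_pointed_htpy_sq: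
  fixes F G P Q :: "'k::field poly \<times> 'k poly"
  assumes "unpointed_htpy n F G"
    and "pointed_rf n P" "pointed_rf n Q" "sq_det_rel F P" "sq_det_rel G Q"
  shows "pointed_htpy_sq n P Q"
  using assms
proof (induction arbitrary: P Q rule: unpointed_htpy.induct)
  case (refl F)
  from refl.prems show ?case by (rule pointed_htpy_sq_if_common_sq_det_rel)
next
  case (scal F c)
  have "sq_det_rel F Q" using sq_det_rel_trans[OF sq_det_rel_scalar[OF scal.hyps(2)] scal.prems(4)] .
  with scal.prems(1-3) show ?case by (rule pointed_htpy_sq_if_common_sq_det_rel)
next
  case (htpy H)
  obtain H' where H': "pointed_rf n H'" "\<And>t. sq_det_rel (evalT_pair t H) (evalT_pair t H')"
    using unpointed_homotopy_normalize[OF htpy.hyps] by blast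
  have "pointed_htpy_sq n P (evalT_pair 0 H')"
    using htpy.prems(1) pointed_rf_evalT_pair[OF H'(1)] htpy.prems(3) H'(2)
    by (rule pointed_htpy_sq_if_common_sq_det_rel)
  moreover have "pointed_htpy_sq n (evalT_pair 0 H') (evalT_pair 1 H')"
    using pointed_htpy.htpy[OF H'(1)] by (rule pointed_htpy_sqI)
  moreover have "pointed_htpy_sq n (evalT_pair 1 H') Q"
    using pointed_rf_evalT_pair[OF H'(1)] htpy.prems(2) H'(2) htpy.prems(4)
    by (rule pointed_htpy_sq_if_common_sq_det_rel)
  ultimately show ?case by (metis pointed_htpy_sq_trans)
next
  case (sym F G)
  have "pointed_htpy_sq n Q P" using sym.IH sym.prems(2,1,4,3) .
  then show ?case by (rule pointed_htpy_sq_sym)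
next
  case (trans F G H)
  have "unpointed_map n G" using unpointed_htpy_imp_unpointed_map[OF trans.hyps(1)] ..
  then obtain a b c d where det: "a*d - b*c = 1" and X: "pointed_rf n (mat2_act a b c d G)"
    by (rule exists_SL2_pointed)
  from det have GX: "sq_det_rel G (mat2_act a b c d G)" by (rule sq_det_rel_SL2)
  show ?case
    using trans.IH(1)[OF trans.prems(1) X trans.prems(3) GX] trans.IH(2)[OF X trans.prems(2) GX trans.prems(4)]
    by (rule pointed_htpy_sq_trans)
qed

theorem lemma4p4:
  fixes n :: nat
  shows "(\<forall>F :: 'k::field poly \<times> 'k poly. unpointed_map n F \<longrightarrow>
            (\<exists>G. pointed_rf n G \<and> unpointed_htpy n F G))
      \<and> (\<forall>f g :: 'k poly \<times> 'k poly. pointed_rf n f \<longrightarrow> pointed_rf n g \<longrightarrow>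
            (unpointed_htpy n f g \<longleftrightarrow> (\<exists>l. l \<noteq> 0 \<and> pointed_htpy n f (lam_sq l g))))"
proof (intro conjI allI impI)
  fix F :: "'k poly \<times> 'k poly" assume "unpointed_map n F"
  thus "\<exists>G. pointed_rf n G \<and> unpointed_htpy n F G" by (rule exists_pointed_unpointed_htpy)
next
  fix f g :: "'k poly \<times> 'k poly"
  assume f: "pointed_rf n f" and g: "pointed_rf n g"
  show "unpointed_htpy n f g \<longleftrightarrow> (\<exists>l. l \<noteq> 0 \<and> pointed_htpy n f (lam_sq l g))"
    unfolding pointed_htpy_sq_def[symmetric]
  proof
    assume "unpointed_htpy n f g"
    thus "pointed_htpy_sq n f g"
      by (rule unpointed_htpy_imp_pointed_htpy_sq[OF _ f g sq_det_rel_refl sq_det_rel_refl])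
  next
    assume "pointed_htpy_sq n f g"
    then obtain l where "l \<noteq> 0" "pointed_htpy n f (lam_sq l g)" unfolding pointed_htpy_sq_def by blast
    thus "unpointed_htpy n f g"
      using unpointed_htpy_lam_sq[OF pointed_rf_imp_unpointed_map[OF g]]
      by (blast intro: pointed_htpy_imp_unpointed_htpy unpointed_htpy.trans)
  qed
qed

end
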